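(* Let $\sigma,\eta>0$ and $\mathscr{C}$ be a family of balls as in the context. Let $B\in\mathscr{C}$ and $x\in B$. Then $y\in B^{(4\lceil|x-y|\rceil)}$ for every $y\in\mathbb{R}^3$.
   Context: Cover: for constants $\sigma,\eta>0$, $\mathscr{C}$ is a family of closed balls in $\mathbb{R}^3$ with $\bigcup_{B\in\mathscr{C}}B=\mathbb{R}^3$ and $|B|\geq 4\pi/3$ for all $B\in\mathscr{C}$, such that (i) each ball in $\mathscr{C}$ intersects at most $\sigma$ balls in $\mathscr{C}$, and (ii) if $B,B'\in\mathscr{C}$ intersect then $\eta^{-1}\le |B|^{1/3}/|B'|^{1/3}\le\eta$. Layers: for $B\in\mathscr{C}$ set $B^{(0)}:=B$, $P^{(0)}:=\{B\}$, and for $n\ge1$, $P^{(n)}:=\{B'\in\mathscr{C}: B'\cap B^{(n-1)}\neq\emptyset\}$, $B^{(n)}:=\bigcup_{B'\in P^{(n)}}B'$. *)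

theory Defs
  imports "HOL-Analysis.Analysis"
begin

fun layer :: "(real^3) set set \<Rightarrow> (real^3) set \<Rightarrow> nat \<Rightarrow> (real^3) set" where
  "layer C B 0 = B"
| "layer C B (Suc n) = \<Union>{B' \<in> C. B' \<inter> layer C B n \<noteq> {}}"

definition good_cover :: "real \<Rightarrow> real \<Rightarrow> (real^3) set set \<Rightarrow> bool" where
  "good_cover \<sigma> \<eta> C \<longleftrightarrow>
     (\<forall>B\<in>C. \<exists>c r. B = cball c r) \<and>
     \<Union>C = UNIV \<and>
     (\<forall>B\<in>C. measure lebesgue B \<ge> 4 * pi / 3) \<and>
     (\<forall>B\<in>C. finite {B'\<in>C. B' \<noteq> B \<and> B' \<inter> B \<noteq> {}} \<and>
              real (card {B'\<in>C. B' \<noteq> B \<and> B' \<inter> B \<noteq> {}}) \<le> \<sigma>) \<and>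
     (\<forall>B\<in>C. \<forall>B'\<in>C. B \<inter> B' \<noteq> {} \<longrightarrow>
        inverse \<eta> \<le> measure lebesgue B powr (1/3) / measure lebesgue B' powr (1/3) \<and>
        measure lebesgue B powr (1/3) / measure lebesgue B' powr (1/3) \<le> \<eta>)"

end

theory Submission
  imports Defs
begin

text \<open>Every ball of a good cover has radius at least 1, because of the volume bound, so each of
  its points lies in a unit ball inside it. If two unit balls have centres \<open>b\<close>, \<open>q\<close> at distance
  at most 3, then by Stewart's theorem every ball of radius \<open>r \<ge> 1\<close> meeting the segment
  \<open>[b, q]\<close> comes within \<open>r + 1\<close> of \<open>b\<close> or \<open>q\<close>, i.e. meets one of the two unit balls. The cover is
  locally finite, so the balls meeting either unit ball have closed unions, and connectedness of
  the segment yields two intersecting balls linking the unit balls. Hence moving a distance 1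
  costs at most three layers, and \<open>3 \<lceil>|x - y|\<rceil> \<le> 4 \<lceil>|x - y|\<rceil>\<close>.\<close>

lemma dist_convex_combination:
  fixes a b :: "'a::real_normed_vector"
  shows "dist a ((1 - u) *\<^sub>R a + u *\<^sub>R b) = \<bar>u\<bar> * dist a b"
    and "dist ((1 - u) *\<^sub>R a + u *\<^sub>R b) b = \<bar>1 - u\<bar> * dist a b"
proof -
  have "a - ((1 - u) *\<^sub>R a + u *\<^sub>R b) = u *\<^sub>R (a - b)"
    and "(1 - u) *\<^sub>R a + u *\<^sub>R b - b = (1 - u) *\<^sub>R (a - b)"
    by (simp_all add: algebra_simps)
  then show "dist a ((1 - u) *\<^sub>R a + u *\<^sub>R b) = \<bar>u\<bar> * dist a b"
    and "dist ((1 - u) *\<^sub>R a + u *\<^sub>R b) b = \<bar>1 - u\<bar> * dist a b"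
    by (simp_all add: dist_norm)
qed

lemma cball_inter_cball_nonempty:
  fixes a b :: "'a::real_normed_vector"
  assumes "dist a b \<le> r + s" "0 \<le> r" "0 \<le> s"
  shows "cball a r \<inter> cball b s \<noteq> {}"
proof (cases "dist a b \<le> r")
  case True
  then have "b \<in> cball a r \<inter> cball b s" using assms(3) by simp
  then show ?thesis by blast
next
  case False
  define u where "u = r / dist a b"
  have d: "0 < dist a b" using False assms(2) by linarith
  have u: "0 \<le> u" "u \<le> 1" using False assms(2) by (simp_all add: u_def divide_le_eq_1)
  let ?w = "(1 - u) *\<^sub>R a + u *\<^sub>R b"
  have "dist a ?w = r" using d assms(2) by (simp add: dist_convex_combination u_def)
  moreover have "dist ?w b = (1 - u) * dist a b" using u by (simp add: dist_convex_combination)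
  then have "dist ?w b = dist a b - r" using d by (simp add: u_def algebra_simps)
  ultimately have "?w \<in> cball a r \<inter> cball b s" using assms(1) by (simp add: dist_commute)
  then show ?thesis by blast
qed

lemma exists_cball_subset_cball_containing:
  fixes c z :: "'a::real_normed_vector"
  assumes "z \<in> cball c r" "0 \<le> s" "s \<le> r"
  obtains b where "cball b s \<subseteq> cball c r" "z \<in> cball b s"
proof -
  define u where "u = 1 - s / r"
  have "0 \<le> r" using assms(2,3) by linarith
  then have u: "0 \<le> u" "u \<le> 1" using assms by (auto simp: u_def divide_le_eq_1)
  define b where "b = (1 - u) *\<^sub>R c + u *\<^sub>R z"
  have "dist c b = u * dist c z" using u by (simp add: b_def dist_convex_combination)
  also have "\<dots> \<le> u * r" using assms(1) u by (simp add: mult_left_mono)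
  finally have "dist c b + s \<le> r"
    using assms by (cases "r = 0") (simp_all add: u_def algebra_simps)
  then have "cball b s \<subseteq> cball c r" by (intro subsetI) (smt (verit) dist_triangle mem_cball)
  moreover have "dist b z = (1 - u) * dist c z" using u by (simp add: b_def dist_convex_combination)
  then have "dist b z = (s / r) * dist c z" by (simp add: u_def)
  then have "z \<in> cball b s"
    using assms mult_left_mono[of "dist c z" r s] by (cases "r = 0") (simp_all add: divide_le_eq mult.commute)
  ultimately show thesis using that by blast
qed

lemma dist_convex_combination_sq:
  fixes b q c :: "'a::real_inner"
  shows "(1 - t) * (dist c b)\<^sup>2 + t * (dist c q)\<^sup>2
       = (dist c ((1 - t) *\<^sub>R b + t *\<^sub>R q))\<^sup>2 + t * (1 - t) * (dist b q)\<^sup>2"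
proof -
  define a where "a = c - b"
  define e where "e = q - b"
  have diffs: "c - q = a - e" "c - ((1 - t) *\<^sub>R b + t *\<^sub>R q) = a - t *\<^sub>R e" "b - q = - e"
    by (simp_all add: a_def e_def algebra_simps)
  show ?thesis
    unfolding dist_norm a_def[symmetric] diffs norm_minus_cancel
    by (simp add: power2_norm_eq_inner inner_diff_left inner_diff_right inner_commute
        algebra_simps)
qed

lemma cball_meeting_short_segment_near_endpoint:
  fixes b q c :: "'a::real_inner"
  assumes "dist b q \<le> 3" "p \<in> closed_segment b q" "dist c p \<le> r" "1 \<le> r"
  shows "dist c b \<le> r + 1 \<or> dist c q \<le> r + 1"
proof (rule ccontr)
  assume "\<not> ?thesis"
  then have far: "(r + 1)\<^sup>2 \<le> (dist c b)\<^sup>2" "(r + 1)\<^sup>2 \<le> (dist c q)\<^sup>2"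
    using assms(4) by (simp_all add: power_mono)
  obtain t where t: "0 \<le> t" "t \<le> 1" "p = (1 - t) *\<^sub>R b + t *\<^sub>R q"
    using assms(2) unfolding closed_segment_def by blast
  have "t * (1 - t) \<le> 1 / 4" using zero_le_power2[of "t - 1/2"] by (simp add: power2_eq_square algebra_simps)
  moreover have "(dist b q)\<^sup>2 \<le> 9" using assms(1) power_mono[of "dist b q" 3 2] by simp
  ultimately have "t * (1 - t) * (dist b q)\<^sup>2 \<le> 1 / 4 * 9"
    using t by (intro mult_mono) auto
  moreover have "(dist c p)\<^sup>2 \<le> r\<^sup>2" using assms(3) by (simp add: power_mono)
  moreover have "(r + 1)\<^sup>2 \<le> (1 - t) * (dist c b)\<^sup>2 + t * (dist c q)\<^sup>2"
    using segment_bound_lemma[OF far t(1,2)] .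
  moreover have "(1 - t) * (dist c b)\<^sup>2 + t * (dist c q)\<^sup>2
      = (dist c p)\<^sup>2 + t * (1 - t) * (dist b q)\<^sup>2"
    using dist_convex_combination_sq[of t c b q] t(3) by simp
  ultimately have "(r + 1)\<^sup>2 \<le> r\<^sup>2 + 9 / 4" by linarith
  then show False using assms(4) by (simp add: power2_eq_square algebra_simps)
qed

lemma good_coverD:
  assumes "good_cover \<sigma> \<eta> C"
  shows "\<forall>G\<in>C. \<exists>c r. G = cball c r" "\<Union>C = UNIV"
    and "\<forall>G\<in>C. 4 * pi / 3 \<le> measure lebesgue G"
    and "\<forall>G\<in>C. finite {G'\<in>C. G' \<noteq> G \<and> G' \<inter> G \<noteq> {}}"
  using assms unfolding good_cover_def by blast+

lemma good_cover_cball: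
  assumes gc: "good_cover \<sigma> \<eta> C" and "G \<in> C"
  obtains c r where "G = cball c r" "1 \<le> r"
proof -
  obtain c r where G: "G = cball c r" using good_coverD(1)[OF gc] assms(2) by blast
  have vol: "4 * pi / 3 \<le> measure lebesgue (cball c r)" using good_coverD(3)[OF gc] assms(2) G by blast
  have "0 \<le> r"
  proof (rule ccontr)
    assume "\<not> 0 \<le> r"
    then show False using vol pi_gt_zero by simp
  qed
  then have "4 * pi / 3 \<le> 4 / 3 * pi * r ^ 3"
    using vol by (simp add: measure_completion content_cball unit_ball_vol_3)
  then have "1 \<le> r ^ 3" by simp
  then have "1 \<le> r" using power_less_one_iff[OF \<open>0 \<le> r\<close>, of 3] by linarith
  with G that show thesis by blast
qed

lemma good_cover_finite_containing:
  assumes "good_cover \<sigma> \<eta> C"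
  shows "finite {G \<in> C. p \<in> G}"
proof -
  obtain H where H: "H \<in> C" "p \<in> H" using good_coverD(2)[OF assms] by blast
  have "{G \<in> C. p \<in> G} \<subseteq> insert H {G \<in> C. G \<noteq> H \<and> G \<inter> H \<noteq> {}}" using H by blast
  moreover have "finite {G \<in> C. G \<noteq> H \<and> G \<inter> H \<noteq> {}}"
    using good_coverD(4)[OF assms] H(1) by blast
  ultimately show ?thesis by (meson finite_insert finite_subset)
qed

text \<open>Each ball of the cover meeting \<open>S \<subseteq> cball w R\<close> contains a unit ball centred in
  \<open>cball w (R + 1)\<close>, hence one of the finitely many centres \<open>L\<close> of a cover of that compact
  set by unit balls; so point-finiteness of the cover suffices.\<close>
lemma good_cover_finite_meeting_bounded:
  assumes gc: "good_cover \<sigma> \<eta> C" and "bounded S"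
  shows "finite {G \<in> C. G \<inter> S \<noteq> {}}"
proof -
  obtain w R where S: "S \<subseteq> cball w R" using \<open>bounded S\<close> bounded_subset_cball by blast
  obtain L where L: "finite L" "cball w (R + 1) \<subseteq> (\<Union>l\<in>L. ball l 1)"
    using compact_eq_totally_bounded[THEN iffD1, OF compact_cball[of w "R + 1"]] zero_less_one
    by blast
  have "{G \<in> C. G \<inter> S \<noteq> {}} \<subseteq> (\<Union>l\<in>L. {G \<in> C. l \<in> G})"
  proof
    fix G assume "G \<in> {G \<in> C. G \<inter> S \<noteq> {}}"
    then obtain p where G: "G \<in> C" "p \<in> G" "p \<in> cball w R" using S by blast
    obtain c r where cr: "G = cball c r" "1 \<le> r" using good_cover_cball[OF gc G(1)] by blast
    obtain h where h: "cball h 1 \<subseteq> G" "p \<in> cball h 1"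
      using exists_cball_subset_cball_containing[of p c r 1] G(2) cr by auto
    have "h \<in> cball w (R + 1)" using G(3) h(2) dist_triangle[of w h p] by (simp add: dist_commute)
    then obtain l where "l \<in> L" "h \<in> ball l 1" using L(2) by blast
    then have "l \<in> G" using h(1) by (auto simp: dist_commute)
    with G(1) \<open>l \<in> L\<close> show "G \<in> (\<Union>l\<in>L. {G \<in> C. l \<in> G})" by blast
  qed
  moreover have "finite (\<Union>l\<in>L. {G \<in> C. l \<in> G})"
    using L(1) good_cover_finite_containing[OF gc] by blast
  ultimately show ?thesis by (rule finite_subset)
qed

lemma good_cover_chain_between_unit_balls:
  assumes gc: "good_cover \<sigma> \<eta> C" and bq: "dist b q \<le> 3"
  obtains G1 G2 where "G1 \<in> C" "G2 \<in> C" "G1 \<inter> cball b 1 \<noteq> {}" "G1 \<inter> G2 \<noteq> {}"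
    "G2 \<inter> cball q 1 \<noteq> {}"
proof -
  define F1 where "F1 = {G \<in> C. G \<inter> cball b 1 \<noteq> {}}"
  define F2 where "F2 = {G \<in> C. G \<inter> cball q 1 \<noteq> {}}"
  have closed_ball: "closed G" if "G \<in> C" for G
    using good_coverD(1)[OF gc] that by auto
  have closed: "closed (\<Union>F1)" "closed (\<Union>F2)"
    unfolding F1_def F2_def
    using good_cover_finite_meeting_bounded[OF gc] closed_ball by (auto intro!: closed_Union)
  have "closed_segment b q \<subseteq> \<Union>F1 \<union> \<Union>F2"
  proof
    fix p assume p: "p \<in> closed_segment b q"
    obtain G where G: "G \<in> C" "p \<in> G" using good_coverD(2)[OF gc] by blast
    obtain c r where cr: "G = cball c r" "1 \<le> r" using good_cover_cball[OF gc G(1)] by blast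
    have "dist c b \<le> r + 1 \<or> dist c q \<le> r + 1"
      using cball_meeting_short_segment_near_endpoint[OF bq p _ cr(2)] G(2) cr(1) by simp
    then have "G \<in> F1 \<or> G \<in> F2"
      using cball_inter_cball_nonempty[of c _ r 1] cr G(1) by (auto simp: F1_def F2_def)
    then show "p \<in> \<Union>F1 \<union> \<Union>F2" using G(2) by blast
  qed
  moreover have "p \<in> \<Union>{G \<in> C. G \<inter> cball p 1 \<noteq> {}}" for p
  proof -
    obtain G where "G \<in> C" "p \<in> G" using good_coverD(2)[OF gc] by blast
    then show ?thesis by fastforce
  qed
  then have "b \<in> \<Union>F1" "q \<in> \<Union>F2" by (simp_all only: F1_def F2_def)
  ultimately have "\<Union>F1 \<inter> \<Union>F2 \<inter> closed_segment b q \<noteq> {}"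
    using connected_closedD[OF connected_segment _ _ closed] by blast
  then show thesis using that by (auto simp: F1_def F2_def)
qed

lemma layer_SucI: "G \<in> C \<Longrightarrow> G \<inter> layer C B n \<noteq> {} \<Longrightarrow> G \<subseteq> layer C B (Suc n)"
  by auto

lemma layer_mono:
  assumes "\<Union>C = UNIV" "m \<le> n"
  shows "layer C B m \<subseteq> layer C B n"
proof (rule lift_Suc_mono_le[OF _ assms(2)])
  show "layer C B k \<subseteq> layer C B (Suc k)" for k
  proof
    fix p assume "p \<in> layer C B k"
    moreover obtain G where "G \<in> C" "p \<in> G" using assms(1) by blast
    ultimately show "p \<in> layer C B (Suc k)" by auto
  qed
qed

lemma good_cover_layer_step:
  assumes gc: "good_cover \<sigma> \<eta> C" and D: "D \<in> C" "D \<subseteq> layer C B m" "z \<in> D"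
    and "dist z y \<le> 1"
  obtains Q where "Q \<in> C" "y \<in> Q" "Q \<subseteq> layer C B (m + 3)"
proof -
  obtain b where b: "cball b 1 \<subseteq> D" "z \<in> cball b 1"
    using good_cover_cball[OF gc D(1)] exists_cball_subset_cball_containing D(3)
    by (metis zero_le_one)
  obtain Q where Q: "Q \<in> C" "y \<in> Q" using good_coverD(2)[OF gc] by blast
  obtain q where q: "cball q 1 \<subseteq> Q" "y \<in> cball q 1"
    using good_cover_cball[OF gc Q(1)] exists_cball_subset_cball_containing Q(2)
    by (metis zero_le_one)
  have "dist b q \<le> dist b z + dist z y + dist y q"
    using dist_triangle[of b q z] dist_triangle[of z q y] by linarith
  then have "dist b q \<le> 3" using b(2) q(2) \<open>dist z y \<le> 1\<close> by (simp add: dist_commute)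
  then obtain G1 G2 where G: "G1 \<in> C" "G2 \<in> C" "G1 \<inter> cball b 1 \<noteq> {}" "G1 \<inter> G2 \<noteq> {}"
    "G2 \<inter> cball q 1 \<noteq> {}"
    by (rule good_cover_chain_between_unit_balls[OF gc])
  have "G1 \<subseteq> layer C B (Suc m)" using layer_SucI[OF G(1)] G(3) b(1) D(2) by blast
  then have "G2 \<subseteq> layer C B (Suc (Suc m))" using layer_SucI[OF G(2)] G(4) by blast
  then have "Q \<subseteq> layer C B (Suc (Suc (Suc m)))" using layer_SucI[OF Q(1)] G(5) q(1) by blast
  moreover have "Suc (Suc (Suc m)) = m + 3" by simp
  ultimately show thesis using that Q by metis
qed

lemma good_cover_layer_reach:
  assumes gc: "good_cover \<sigma> \<eta> C" and "B \<in> C" "x \<in> B" and "dist x y \<le> real k"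
  shows "\<exists>Q\<in>C. y \<in> Q \<and> Q \<subseteq> layer C B (3 * k)"
  using assms(4)
proof (induction k arbitrary: y)
  case 0
  then show ?case using assms(2,3) by auto
next
  case (Suc k)
  define u where "u = real k / (real k + 1)"
  define z where "z = (1 - u) *\<^sub>R x + u *\<^sub>R y"
  have u: "0 \<le> u" "u \<le> 1" by (simp_all add: u_def)
  have "dist x z = u * dist x y" using u by (simp add: z_def dist_convex_combination)
  also have "\<dots> \<le> u * (real k + 1)" using Suc.prems u by (simp add: mult_left_mono)
  also have "\<dots> = real k" by (simp add: u_def)
  finally obtain D where D: "D \<in> C" "z \<in> D" "D \<subseteq> layer C B (3 * k)" using Suc.IH by blast
  have "dist z y = (1 - u) * dist x y" using u by (simp add: z_def dist_convex_combination)
  also have "\<dots> \<le> (1 - u) * (real k + 1)" using Suc.prems u by (simp add: mult_left_mono)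
  also have "\<dots> = 1" by (simp add: u_def field_simps)
  finally obtain Q where "Q \<in> C" "y \<in> Q" "Q \<subseteq> layer C B (3 * k + 3)"
    by (rule good_cover_layer_step[OF gc D(1,3,2)])
  moreover have "3 * k + 3 = 3 * Suc k" by simp
  ultimately show ?case by metis
qed

theorem corollary3p2:
  fixes \<sigma> \<eta> :: real and C :: "(real^3) set set" and B :: "(real^3) set" and x :: "real^3"
  assumes "\<sigma> > 0" and "\<eta> > 0" and "good_cover \<sigma> \<eta> C"
    and "B \<in> C" and "x \<in> B"
  shows "\<forall>y::real^3. y \<in> layer C B (4 * nat \<lceil>dist x y\<rceil>)"
proof
  fix y :: "real^3"
  define k where "k = nat \<lceil>dist x y\<rceil>"
  have "dist x y \<le> real k" unfolding k_def by linarith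
  then obtain Q where "y \<in> Q" "Q \<subseteq> layer C B (3 * k)"
    using good_cover_layer_reach[OF assms(3-5)] by blast
  moreover have "layer C B (3 * k) \<subseteq> layer C B (4 * k)"
    using layer_mono[OF good_coverD(2)[OF assms(3)]] by simp
  ultimately show "y \<in> layer C B (4 * nat \<lceil>dist x y\<rceil>)" unfolding k_def by blast
qed

end
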